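(* Let $(X_j)_{j\in\mathbb N}$ be the generic waiting-time sequence of a Crump-Mode-Jagers process as in the context, let $(X'_j)_{j\in\mathbb N}$ be an independent copy of it, and assume Assumption (A). Suppose that for some $\alpha>0$ and $K\in\mathbb N$, \[\sum_{j=1}^\infty\mathbb E\Big[e^{-\alpha\sum_{i=1}^jX_i}\Big]<1\quad\text{and}\quad\prod_{i=K+1}^\infty\mathbb E\Big[e^{\alpha(X'_i-X_i)}\Big]<\infty.\] Then for every $u\in\mathcal U$, \[\mathbb E\big[\,|\{v=v_1\cdots v_m\in\mathcal U:\ m\ge1,\ v_1\ge K,\ uv\text{ catches up to }u\}|\,\big]=\sum_{v\in\mathcal U:\,|v|\ge1,\ v_1\ge K}\mathbb P(uv\text{ catches up to }u)<\infty.\]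
   Context: Ulam–Harris tree: $\mathcal U=\bigcup_{n\ge0}\mathbb N^n$ with $\mathbb N^0=\{\varnothing\}$; $u=u_1\cdots u_k$, $|u|=k$, $uj$ is the $j$-th child of $u$, and $uv$ denotes concatenation. Let $(X_j)_{j\in\mathbb N}$ be $[0,\infty]$-valued random variables and for each $u\in\mathcal U$ let $(X(uj))_{j\in\mathbb N}$ be a copy of $(X_j)_j$, independent over different $u$. Birth times: $\mathcal B(\varnothing)=0$, $\mathcal B(ui)=\mathcal B(u)+\sum_{j=1}^iX(uj)$. For $u\in\mathcal U$ and $v=v_1\cdots v_m$ with $m\ge1$, "$uv$ catches up to $u$" means there exists $j\in\mathbb N$ with $\mathcal B(uv(v_1+j))\le\mathcal B(u(v_1+j))$. Assumption (A): (i) $(X_i)_{i\in\mathbb N}$ mutually independent; (ii) $X_j<\infty$ a.s. for each $j$; (iii) $\sum_{j=1}^\infty\prod_{i=1}^j\mathbb P(X_i=0)<1$. *)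

theory Defs
  imports "HOL-Probability.Probability"
begin

text \<open>Ulam--Harris labels are lists of naturals; the index set \<open>\<nat> = {1,2,...}\<close>.\<close>
definition UH :: "nat list set" where
  "UH = {u. \<forall>x\<in>set u. 1 \<le> x}"

text \<open>\<open>Xf u j \<omega>\<close> is the waiting time \<open>X(uj)\<close> (for \<open>j \<ge> 1\<close>).
  Birth times: \<open>B(\<emptyset>) = 0\<close>, \<open>B(ui) = B(u) + \<Sum>_{j=1}^i X(uj)\<close>.\<close>
fun birth_aux :: "(nat list \<Rightarrow> nat \<Rightarrow> 'a \<Rightarrow> ennreal) \<Rightarrow> 'a \<Rightarrow> nat list \<Rightarrow> nat list \<Rightarrow> ennreal" where
  "birth_aux Xf \<omega> p [] = 0"
| "birth_aux Xf \<omega> p (i # v) = (\<Sum>j\<in>{1..i}. Xf p j \<omega>) + birth_aux Xf \<omega> (p @ [i]) v"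

definition birth :: "(nat list \<Rightarrow> nat \<Rightarrow> 'a \<Rightarrow> ennreal) \<Rightarrow> nat list \<Rightarrow> 'a \<Rightarrow> ennreal" where
  "birth Xf u \<omega> = birth_aux Xf \<omega> [] u"

definition catches_up :: "(nat list \<Rightarrow> nat \<Rightarrow> 'a \<Rightarrow> ennreal) \<Rightarrow> nat list \<Rightarrow> nat list \<Rightarrow> 'a \<Rightarrow> bool" where
  "catches_up Xf u v \<omega> \<longleftrightarrow> v \<noteq> [] \<and>
     (\<exists>j\<ge>1. birth Xf (u @ v @ [hd v + j]) \<omega> \<le> birth Xf (u @ [hd v + j]) \<omega>)"

definition exp_neg :: "real \<Rightarrow> ennreal \<Rightarrow> ennreal" where
  "exp_neg \<alpha> x = (if x = \<infinity> then 0 else ennreal (exp (- \<alpha> * enn2real x)))"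

definition ecard :: "'a set \<Rightarrow> ennreal" where
  "ecard S = (if finite S then of_nat (card S) else \<infinity>)"

end

theory Submission
  imports Defs
begin

(*
  Write v = k w and D = B(uvk) - B(uk). Then uv catches up to u exactly when the random walk
  S_j = (X(u(k+1)) - X(uv(k+1))) + ... + (X(u(k+j)) - X(uv(k+j))), started at -D, reaches 0.
  The weight W_n = exp(-\<alpha> D) * prod_{i<=n} exp(\<alpha> X(u(k+i))) exp(-\<alpha> X(uv(k+i))) is at
  least 1 once 0 has been reached, and by independence every step multiplies its mean by
  E exp(\<alpha> X_{k+i}) * E exp(-\<alpha> X_{k+i}) >= 1. Optional stopping at the first crossing, done
  as an induction over the first n steps, bounds the probability of catching up by E exp(-\<alpha> D)
  times the partial products of the second hypothesis. By independence E exp(-\<alpha> D) is the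
  product of a_m = E exp(-\<alpha> (X_1 + ... + X_m)) over the letters m of v, so the sum over v is
  dominated by the geometric series in sum_m a_m < 1.
*)

lemma sum_singleton_times: "(\<Sum>x\<in>{q} \<times> A. f x) = (\<Sum>i\<in>A. f (q, i))"
proof -
  have "{q} \<times> A = Pair q ` A" by auto
  then show ?thesis by (simp add: sum.reindex inj_on_def)
qed

lemma prod_singleton_times: "(\<Prod>x\<in>{q} \<times> A. f x) = (\<Prod>i\<in>A. f (q, i))"
proof -
  have "{q} \<times> A = Pair q ` A" by auto
  then show ?thesis by (simp add: prod.reindex inj_on_def)
qed

lemma sum_atLeastAtMost_add_split:
  "(\<Sum>i=1..k+j. f i) = (\<Sum>i=1..k. f i) + (\<Sum>i<j. f (Suc (k + i)))"
  by (induction j) (simp_all add: add.assoc)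

lemma prod_lessThan_shift:
  "(\<Prod>i<n. f (Suc (k + i))) = (\<Prod>m=Suc k..k+n. f m)"
  by (induction n) (simp_all add: mult.commute)

lemma prod_le_prod_superset_ennreal:
  fixes f :: "'a \<Rightarrow> ennreal"
  assumes "finite B" "A \<subseteq> B" "\<And>x. x \<in> B - A \<Longrightarrow> 1 \<le> f x"
  shows "prod f A \<le> prod f B"
proof -
  have "prod f A * 1 \<le> prod f A * prod f (B - A)"
    using assms(3) by (intro mult_left_mono prod_ge_1) auto
  also have "\<dots> = prod f B"
    using assms(1,2) by (simp add: prod.subset_diff[of A B] mult.commute)
  finally show ?thesis by simp
qed

lemma exp_neg_add: "exp_neg a (x + y) = exp_neg a x * exp_neg a y"
proof (cases "x = \<infinity> \<or> y = \<infinity>")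
  case False
  then have "enn2real (x + y) = enn2real x + enn2real y"
    by (simp add: enn2real_plus less_top)
  with False show ?thesis
    by (simp add: exp_neg_def ring_distribs exp_add[symmetric] ennreal_mult'[symmetric])
qed (auto simp: exp_neg_def)

lemma exp_neg_sum: "exp_neg a (\<Sum>x\<in>A. f x) = (\<Prod>x\<in>A. exp_neg a (f x))"
  by (induction A rule: infinite_finite_induct) (simp_all add: exp_neg_add, simp_all add: exp_neg_def)

lemma borel_measurable_exp_neg [measurable]: "exp_neg a \<in> borel_measurable borel"
  unfolding exp_neg_def by measurable

lemma one_le_exp_neg_mult:
  assumes "x \<le> y" "y < \<infinity>" "0 \<le> \<alpha>"
  shows "1 \<le> exp_neg \<alpha> x * exp_neg (- \<alpha>) y"
proof -
  have "x < \<infinity>" using assms by auto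
  then have "exp_neg \<alpha> x * exp_neg (- \<alpha>) y = ennreal (exp (\<alpha> * (enn2real y - enn2real x)))"
    using assms by (simp add: exp_neg_def ennreal_mult'[symmetric] exp_add[symmetric] algebra_simps
      less_top)
  moreover have "enn2real x \<le> enn2real y"
    using assms by (simp add: enn2real_mono)
  ultimately show ?thesis
    using assms by simp
qed

lemma amgm_exp:
  fixes t a :: real
  shows "0 < t \<Longrightarrow> 2 \<le> t * exp a + exp (- a) / t"
proof -
  assume "0 < t"
  then have "0 < t * exp a" by simp
  moreover have "exp (- a) / t = 1 / (t * exp a)" by (simp add: exp_minus field_simps)
  moreover have "2 \<le> s + 1 / s" if "0 < s" for s :: real
    using that sum_squares_ge_zero[of "s - 1" 0] by (simp add: field_simps power2_eq_square)
  ultimately show ?thesis by simp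
qed

section \<open>Ulam--Harris paths and birth times\<close>

lemma UH_eq_lists: "UH = lists {1..}"
  by (auto simp: UH_def)

(* (q, j) \<in> path_edges p w iff the waiting time X(qj) is a summand of B(pw) - B(p). *)
fun path_edges :: "nat list \<Rightarrow> nat list \<Rightarrow> (nat list \<times> nat) set" where
  "path_edges p [] = {}"
| "path_edges p (i # w) = {p} \<times> {1..i} \<union> path_edges (p @ [i]) w"

lemma finite_path_edges [simp]: "finite (path_edges p w)"
  by (induction w arbitrary: p) auto

lemma path_edges_parent:
  assumes "(q, j) \<in> path_edges p w"
  shows "\<exists>r. q = p @ r \<and> length r < length w"
  using assms
proof (induction w arbitrary: p)
  case (Cons i w)
  then show ?case by (fastforce dest: Cons.IH)
qed simp

lemma path_edges_Cons_disjoint: "{p} \<times> A \<inter> path_edges (p @ [i]) w = {}"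
  by (auto dest: path_edges_parent)

lemma path_edges_append: "path_edges p (v @ w) = path_edges p v \<union> path_edges (p @ v) w"
  by (induction v arbitrary: p) auto

lemma path_edges_subset:
  "p \<in> lists A \<Longrightarrow> w \<in> lists A \<Longrightarrow> path_edges p w \<subseteq> lists A \<times> {1..}"
  by (induction w arbitrary: p) auto

lemma birth_aux_eq_sum_path_edges:
  "birth_aux Xf \<omega> p w = (\<Sum>(q, j)\<in>path_edges p w. Xf q j \<omega>)"
  by (induction w arbitrary: p)
     (simp_all add: sum.union_disjoint path_edges_Cons_disjoint sum_singleton_times)

lemma birth_aux_append:
  "birth_aux Xf \<omega> p (v @ w) = birth_aux Xf \<omega> p v + birth_aux Xf \<omega> (p @ v) w"
  by (induction v arbitrary: p) (auto simp: add.assoc)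

lemma prod_path_edges:
  "(\<Prod>(q, i)\<in>path_edges p w. f i) = prod_list (map (\<lambda>m. \<Prod>i=1..m. f i) w)"
  by (induction w arbitrary: p)
     (simp_all add: prod.union_disjoint path_edges_Cons_disjoint prod_singleton_times)

lemma birth_Cons_snoc:
  "birth Xf (u @ k # w @ [k + j]) \<omega>
     = birth Xf (u @ [k]) \<omega> + ((\<Sum>(q, i)\<in>path_edges (u @ [k]) (w @ [k]). Xf q i \<omega>)
         + (\<Sum>i<j. Xf (u @ k # w) (Suc (k + i)) \<omega>))"
proof -
  have "birth Xf (u @ k # w @ [k + j]) \<omega> = birth Xf (u @ [k]) \<omega>
      + (birth_aux Xf \<omega> (u @ [k]) w + birth_aux Xf \<omega> (u @ k # w) [k + j])"
    using birth_aux_append[of Xf \<omega> "[]" "u @ [k]" "w @ [k + j]"]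
      birth_aux_append[of Xf \<omega> "u @ [k]" w "[k + j]"]
    by (simp add: birth_def)
  also have "birth_aux Xf \<omega> (u @ k # w) [k + j]
      = (\<Sum>i=1..k. Xf (u @ k # w) i \<omega>) + (\<Sum>i<j. Xf (u @ k # w) (Suc (k + i)) \<omega>)"
    by (simp only: birth_aux.simps sum_atLeastAtMost_add_split add_0_right)
  also have "birth_aux Xf \<omega> (u @ [k]) w + \<dots>
      = birth_aux Xf \<omega> (u @ [k]) (w @ [k]) + (\<Sum>i<j. Xf (u @ k # w) (Suc (k + i)) \<omega>)"
    by (simp add: birth_aux_append add.assoc)
  finally show ?thesis
    by (simp add: birth_aux_eq_sum_path_edges)
qed

lemma birth_snoc_add:
  "birth Xf (u @ [k + j]) \<omega> = birth Xf (u @ [k]) \<omega> + (\<Sum>i<j. Xf u (Suc (k + i)) \<omega>)"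
proof -
  have "birth Xf (u @ [k + j]) \<omega> = birth Xf u \<omega> + birth_aux Xf \<omega> u [k + j]"
    by (simp only: birth_def birth_aux_append append_Nil)
  also have "birth_aux Xf \<omega> u [k + j] = birth_aux Xf \<omega> u [k] + (\<Sum>i<j. Xf u (Suc (k + i)) \<omega>)"
    by (simp only: birth_aux.simps sum_atLeastAtMost_add_split add_0_right)
  finally show ?thesis
    by (simp add: birth_def birth_aux_append add.assoc)
qed

lemma catches_up_Cons_iff:
  assumes "birth Xf (u @ [k]) \<omega> \<noteq> \<infinity>"
  shows "catches_up Xf u (k # w) \<omega> \<longleftrightarrow> (\<exists>j>0.
    (\<Sum>(q, i)\<in>path_edges (u @ [k]) (w @ [k]). Xf q i \<omega>) + (\<Sum>i<j. Xf (u @ k # w) (Suc (k + i)) \<omega>)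
      \<le> (\<Sum>i<j. Xf u (Suc (k + i)) \<omega>))"
  using assms
  by (auto simp: catches_up_def birth_Cons_snoc birth_snoc_add ennreal_add_left_cancel_le Suc_le_eq)

section \<open>Series over words\<close>

lemma infsum_eq_nn_integral_count_space:
  fixes f :: "'b \<Rightarrow> ennreal"
  assumes "countable A"
  shows "infsum f A = (\<integral>\<^sup>+x. f x \<partial>count_space A)"
proof (cases "finite A")
  case True
  then show ?thesis by (simp add: nn_integral_count_space_finite)
next
  case False
  define g where "g = from_nat_into A"
  have g: "bij_betw g UNIV A"
    unfolding g_def by (rule bij_betw_from_nat_into[OF assms False])
  have "infsum f A = infsum (\<lambda>n. f (g n)) UNIV"
    by (rule infsum_reindex_bij_betw[OF g, symmetric])
  also have "\<dots> = (\<Sum>n. f (g n))"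
    by (metis has_sum_imp_sums has_sum_infsum nonneg_summable_on_complete sums_unique zero_le)
  also have "\<dots> = (\<integral>\<^sup>+x. f x \<partial>count_space A)"
    by (simp add: nn_integral_count_space_nat[symmetric] nn_integral_bij_count_space[OF g])
  finally show ?thesis .
qed

lemma nn_integral_ecard_eq_infsum:
  assumes "countable S" and [measurable]: "\<And>v. v \<in> S \<Longrightarrow> {\<omega> \<in> space M. Q v \<omega>} \<in> sets M"
  shows "(\<integral>\<^sup>+\<omega>. ecard {v \<in> S. Q v \<omega>} \<partial>M) = (\<Sum>\<^sub>\<infinity>v\<in>S. emeasure M {\<omega> \<in> space M. Q v \<omega>})"
proof -
  have "(\<integral>\<^sup>+\<omega>. ecard {v \<in> S. Q v \<omega>} \<partial>M)
      = (\<integral>\<^sup>+\<omega>. \<integral>\<^sup>+v. indicator {\<omega> \<in> space M. Q v \<omega>} \<omega> \<partial>count_space S \<partial>M)"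
  proof (intro nn_integral_cong)
    fix \<omega> assume "\<omega> \<in> space M"
    have "ecard {v \<in> S. Q v \<omega>} = emeasure (count_space S) {v \<in> S. Q v \<omega>}"
      by (simp add: ecard_def emeasure_count_space)
    also have "\<dots> = (\<integral>\<^sup>+v. indicator {v \<in> S. Q v \<omega>} v \<partial>count_space S)"
      by (rule nn_integral_indicator[symmetric]) auto
    also have "\<dots> = (\<integral>\<^sup>+v. indicator {\<omega> \<in> space M. Q v \<omega>} \<omega> \<partial>count_space S)"
      using \<open>\<omega> \<in> space M\<close> by (intro nn_integral_cong) (simp add: indicator_def)
    finally show "ecard {v \<in> S. Q v \<omega>}
        = (\<integral>\<^sup>+v. indicator {\<omega> \<in> space M. Q v \<omega>} \<omega> \<partial>count_space S)" .
  qed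
  also have "\<dots> = (\<integral>\<^sup>+v. \<integral>\<^sup>+\<omega>. indicator {\<omega> \<in> space M. Q v \<omega>} \<omega> \<partial>M \<partial>count_space S)"
    using assms by (intro nn_integral_count_space_nn_integral) auto
  also have "\<dots> = (\<integral>\<^sup>+v. emeasure M {\<omega> \<in> space M. Q v \<omega>} \<partial>count_space S)"
    by (intro nn_integral_cong nn_integral_indicator) simp
  also have "\<dots> = (\<Sum>\<^sub>\<infinity>v\<in>S. emeasure M {\<omega> \<in> space M. Q v \<omega>})"
    using assms(1) by (rule infsum_eq_nn_integral_count_space[symmetric])
  finally show ?thesis .
qed

lemma bij_betw_Cons_lists_length:
  "bij_betw (\<lambda>(i, w). i # w) (A \<times> {w \<in> lists A. length w = n}) {v \<in> lists A. length v = Suc n}"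
  by (rule bij_betwI[where g = "\<lambda>v. (hd v, tl v)"]) (auto simp: length_Suc_conv)

lemma nn_integral_prod_list_lists_length:
  fixes a :: "'b \<Rightarrow> ennreal"
  assumes "countable A"
  shows "(\<integral>\<^sup>+v. prod_list (map a v) \<partial>count_space {v \<in> lists A. length v = n})
       = (\<integral>\<^sup>+i. a i \<partial>count_space A) ^ n"
proof (induction n)
  case 0
  have "{v \<in> lists A. length v = 0} = {[]}" by auto
  then show ?case by (simp add: nn_integral_count_space_finite)
next
  case (Suc n)
  let ?W = "{w \<in> lists A. length w = n}"
  have countable_W: "countable ?W"
    by (rule countable_subset[OF _ countable_lists[OF assms]]) auto
  interpret W: sigma_finite_measure "count_space ?W"
    by (rule sigma_finite_measure_count_space_countable[OF countable_W])
  have "(\<integral>\<^sup>+v. prod_list (map a v) \<partial>count_space {v \<in> lists A. length v = Suc n})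
      = (\<integral>\<^sup>+x. a (fst x) * prod_list (map a (snd x)) \<partial>count_space (A \<times> ?W))"
    by (subst nn_integral_bij_count_space[OF bij_betw_Cons_lists_length, symmetric])
       (simp add: case_prod_beta)
  also have "\<dots> = (\<integral>\<^sup>+i. \<integral>\<^sup>+w. a i * prod_list (map a w) \<partial>count_space ?W \<partial>count_space A)"
    using W.nn_integral_fst[of "\<lambda>x. a (fst x) * prod_list (map a (snd x))"]
    by (simp add: pair_measure_countable[OF assms countable_W])
  also have "\<dots> = (\<integral>\<^sup>+i. a i \<partial>count_space A) ^ Suc n"
    by (simp add: nn_integral_cmult nn_integral_multc Suc.IH)
  finally show ?case .
qed

lemma nn_integral_prod_list_lists:
  fixes a :: "'b \<Rightarrow> ennreal"
  assumes "countable A"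
  shows "(\<integral>\<^sup>+v. prod_list (map a v) \<partial>count_space (lists A)) = (\<Sum>n. (\<integral>\<^sup>+i. a i \<partial>count_space A) ^ n)"
proof -
  have "prod_list (map a v) * indicator (lists A) v
      = (\<Sum>n. prod_list (map a v) * indicator {v \<in> lists A. length v = n} v)" for v
  proof -
    have "(\<Sum>n. indicator {v \<in> lists A. length v = n} v :: ennreal)
        = indicator (\<Union>n. {v \<in> lists A. length v = n}) v"
      by (rule suminf_indicator) (auto simp: disjoint_family_on_def)
    moreover have "(\<Union>n. {v \<in> lists A. length v = n}) = lists A" by auto
    ultimately show ?thesis by (simp add: ennreal_suminf_cmult)
  qed
  then have "(\<integral>\<^sup>+v. prod_list (map a v) \<partial>count_space (lists A))
      = (\<integral>\<^sup>+v. (\<Sum>n. prod_list (map a v) * indicator {v \<in> lists A. length v = n} v) \<partial>count_space UNIV)"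
    by (simp add: nn_integral_count_space_indicator)
  also have "\<dots> = (\<Sum>n. \<integral>\<^sup>+v. prod_list (map a v) * indicator {v \<in> lists A. length v = n} v \<partial>count_space UNIV)"
    by (rule nn_integral_suminf) simp
  also have "\<dots> = (\<Sum>n. (\<integral>\<^sup>+i. a i \<partial>count_space A) ^ n)"
    by (simp add: nn_integral_count_space_indicator[symmetric] nn_integral_prod_list_lists_length[OF assms])
  finally show ?thesis .
qed

lemma nn_integral_prod_list_lists_lt_top:
  fixes a :: "'b \<Rightarrow> ennreal"
  assumes "countable A" and "(\<integral>\<^sup>+i. a i \<partial>count_space A) < 1"
  shows "(\<integral>\<^sup>+v. prod_list (map a v) \<partial>count_space (lists A)) < \<infinity>"
proof -
  obtain r where r: "(\<integral>\<^sup>+i. a i \<partial>count_space A) = ennreal r" "0 \<le> r" "r < 1"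
    using assms(2) by (cases "\<integral>\<^sup>+i. a i \<partial>count_space A") (auto simp: ennreal_less_iff)
  then have "(\<Sum>n. (\<integral>\<^sup>+i. a i \<partial>count_space A) ^ n) = ennreal (\<Sum>n. r ^ n)"
    by (simp add: ennreal_power suminf_ennreal2)
  then show ?thesis
    by (simp add: nn_integral_prod_list_lists[OF assms(1)])
qed

lemma distr_component_eq:
  assumes X: "\<And>i. i \<in> I \<Longrightarrow> X i \<in> measurable M (N i)"
    and Y: "\<And>i. i \<in> I \<Longrightarrow> Y i \<in> measurable M (N i)"
    and eq: "distr M (PiM I N) (\<lambda>\<omega>. \<lambda>i\<in>I. X i \<omega>) = distr M (PiM I N) (\<lambda>\<omega>. \<lambda>i\<in>I. Y i \<omega>)"
    and i: "i \<in> I"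
  shows "distr M (N i) (X i) = distr M (N i) (Y i)"
proof -
  have "distr M (N i) (X i) = distr (distr M (PiM I N) (\<lambda>\<omega>. \<lambda>i\<in>I. X i \<omega>)) (N i) (\<lambda>f. f i)"
    using X i by (subst distr_distr) (auto intro!: distr_cong measurable_restrict)
  also have "\<dots> = distr M (N i) (Y i)"
    using Y i unfolding eq by (subst distr_distr) (auto intro!: distr_cong measurable_restrict)
  finally show ?thesis .
qed

lemma nn_integral_eq_if_distr_eq:
  assumes "distr M N X = distr M N Y" "X \<in> measurable M N" "Y \<in> measurable M N"
    and "g \<in> borel_measurable N"
  shows "(\<integral>\<^sup>+\<omega>. g (X \<omega>) \<partial>M) = (\<integral>\<^sup>+\<omega>. g (Y \<omega>) \<partial>M)"
proof -
  have "(\<integral>\<^sup>+\<omega>. g (X \<omega>) \<partial>M) = (\<integral>\<^sup>+x. g x \<partial>distr M N X)"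
    using assms(2,4) by (simp add: nn_integral_distr)
  also have "\<dots> = (\<integral>\<^sup>+\<omega>. g (Y \<omega>) \<partial>M)"
    unfolding assms(1) using assms(3,4) by (simp add: nn_integral_distr)
  finally show ?thesis .
qed

lemma AE_iff_if_distr_eq:
  assumes "distr M N X = distr M N Y" "X \<in> measurable M N" "Y \<in> measurable M N"
    and "{x \<in> space N. P x} \<in> sets N"
  shows "(AE \<omega> in M. P (X \<omega>)) \<longleftrightarrow> (AE \<omega> in M. P (Y \<omega>))"
proof -
  have "(AE \<omega> in M. P (X \<omega>)) \<longleftrightarrow> (AE x in distr M N X. P x)"
    using assms(2,4) by (simp add: AE_distr_iff)
  also have "\<dots> \<longleftrightarrow> (AE \<omega> in M. P (Y \<omega>))"
    unfolding assms(1) using assms(3,4) by (simp add: AE_distr_iff)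
  finally show ?thesis .
qed

lemma vimage_restrict_prod_emb:
  assumes "\<And>j. j \<in> J \<Longrightarrow> X j \<in> measurable M (N j)" "L \<subseteq> J" "L \<noteq> {}"
  shows "(\<lambda>\<omega>. \<lambda>j\<in>J. X j \<omega>) -` prod_emb J N L (PiE L B) \<inter> space M
       = (\<Inter>j\<in>L. X j -` B j \<inter> space M)"
  using assms measurable_space[OF assms(1)] by (auto simp: prod_emb_iff PiE_iff subset_eq)

lemma borel_measurable_PiM_eval [measurable]:
  "(\<lambda>\<xi>. \<xi> x) \<in> borel_measurable (PiM J (\<lambda>_. borel :: 'b::topological_space measure))"
proof (cases "x \<in> J")
  case False
  have "(\<lambda>_. undefined) \<in> borel_measurable (PiM J (\<lambda>_. borel :: 'b measure))"
    by simp
  then show ?thesis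
    by (rule measurable_cong[THEN iffD1, rotated]) (use False in \<open>auto simp: space_PiM PiE_def extensional_def\<close>)
qed (rule measurable_component_singleton)

lemma borel_measurable_PiM_sum:
  "(\<lambda>\<xi>. \<Sum>x\<in>S. \<xi> (h x)) \<in> borel_measurable (PiM J (\<lambda>_. borel :: ennreal measure))"
  by (intro borel_measurable_sum borel_measurable_PiM_eval)

context prob_space
begin

lemma indep_vars_if_distr_restrict_eq:
  assumes X: "\<And>i. i \<in> I \<Longrightarrow> random_variable (N i) (X i)"
    and Y: "\<And>i. i \<in> I \<Longrightarrow> random_variable (N i) (Y i)"
    and eq: "distr M (PiM I N) (\<lambda>\<omega>. \<lambda>i\<in>I. X i \<omega>) = distr M (PiM I N) (\<lambda>\<omega>. \<lambda>i\<in>I. Y i \<omega>)"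
    and indep: "indep_vars N Y I"
  shows "indep_vars N X I"
proof (cases "I = {}")
  case True
  then show ?thesis by (simp add: indep_vars_def indep_sets_def)
next
  case False
  have "distr M (PiM I N) (\<lambda>\<omega>. \<lambda>i\<in>I. X i \<omega>) = PiM I (\<lambda>i. distr M (N i) (Y i))"
    using indep_vars_iff_distr_eq_PiM'[OF False Y] indep eq by simp
  also have "\<dots> = PiM I (\<lambda>i. distr M (N i) (X i))"
    using distr_component_eq[OF X Y eq] by (intro PiM_cong) simp_all
  finally show ?thesis
    using indep_vars_iff_distr_eq_PiM'[OF False X] by simp
qed

lemma prob_Inter_vimage_Sigma:
  fixes X :: "'i \<Rightarrow> 'j \<Rightarrow> 'a \<Rightarrow> 'b"
  assumes blocks: "indep_vars (\<lambda>i. PiM (J i) (N i)) (\<lambda>i \<omega>. \<lambda>j\<in>J i. X i j \<omega>) I"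
    and within: "\<And>i. i \<in> I \<Longrightarrow> indep_vars (N i) (X i) (J i)"
    and K: "K \<noteq> {}" "K \<subseteq> Sigma I J" "finite K"
    and B: "\<And>i j. (i, j) \<in> K \<Longrightarrow> B (i, j) \<in> sets (N i j)"
  shows "prob (\<Inter>(i, j)\<in>K. X i j -` B (i, j) \<inter> space M)
    = (\<Prod>(i, j)\<in>K. prob (X i j -` B (i, j) \<inter> space M))"
proof -
  define P where "P = fst ` K"
  define L where "L i = {j. (i, j) \<in> K}" for i
  have K_eq: "K = Sigma P L" by (force simp: P_def L_def)
  have P: "P \<noteq> {}" "finite P" "P \<subseteq> I" using K by (auto simp: P_def)
  have L: "L i \<noteq> {}" "finite (L i)" "L i \<subseteq> J i" if "i \<in> P" for i
  proof -
    have "L i \<subseteq> snd ` K" by (force simp: L_def)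
    then show "finite (L i)" using K(3) by (metis finite_imageI finite_subset)
    show "L i \<noteq> {}" "L i \<subseteq> J i" using that K(2) by (auto simp: P_def L_def)
  qed
  define D where "D i = prod_emb (J i) (N i) (L i) (PiE (L i) (\<lambda>j. B (i, j)))" for i
  have D: "D i \<in> sets (PiM (J i) (N i))" if "i \<in> P" for i
    using L[OF that] B unfolding D_def by (intro sets_PiM_I) (auto simp: L_def)
  have block_event: "(\<lambda>\<omega>. \<lambda>j\<in>J i. X i j \<omega>) -` D i \<inter> space M = (\<Inter>j\<in>L i. X i j -` B (i, j) \<inter> space M)"
    if "i \<in> P" for i
    using within[of i] P(3) L[OF that] that unfolding D_def
    by (subst vimage_restrict_prod_emb) (auto simp: indep_vars_def)
  have "(\<Inter>(i, j)\<in>K. X i j -` B (i, j) \<inter> space M) = (\<Inter>i\<in>P. \<Inter>j\<in>L i. X i j -` B (i, j) \<inter> space M)"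
    unfolding K_eq by blast
  also have "\<dots> = (\<Inter>i\<in>P. (\<lambda>\<omega>. \<lambda>j\<in>J i. X i j \<omega>) -` D i \<inter> space M)"
    using block_event by (intro INF_cong) auto
  finally have "prob (\<Inter>(i, j)\<in>K. X i j -` B (i, j) \<inter> space M)
      = (\<Prod>i\<in>P. prob ((\<lambda>\<omega>. \<lambda>j\<in>J i. X i j \<omega>) -` D i \<inter> space M))"
    using indep_varsD[OF blocks P] D by simp
  also have "\<dots> = (\<Prod>i\<in>P. \<Prod>j\<in>L i. prob (X i j -` B (i, j) \<inter> space M))"
    using indep_varsD[OF within L] B P(3) by (simp add: block_event L_def subset_eq)
  also have "\<dots> = (\<Prod>(i, j)\<in>K. prob (X i j -` B (i, j) \<inter> space M))"
    using P L by (simp add: K_eq prod.Sigma)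
  finally show ?thesis .
qed

lemma indep_vars_Sigma:
  fixes X :: "'i \<Rightarrow> 'j \<Rightarrow> 'a \<Rightarrow> 'b"
  assumes blocks: "indep_vars (\<lambda>i. PiM (J i) (N i)) (\<lambda>i \<omega>. \<lambda>j\<in>J i. X i j \<omega>) I"
    and within: "\<And>i. i \<in> I \<Longrightarrow> indep_vars (N i) (X i) (J i)"
  shows "indep_vars (\<lambda>(i, j). N i j) (\<lambda>(i, j). X i j) (Sigma I J)"
  unfolding indep_vars_def2
proof (intro conjI ballI indep_setsI)
  fix x assume "x \<in> Sigma I J"
  then show "random_variable (case x of (i, j) \<Rightarrow> N i j) (case x of (i, j) \<Rightarrow> X i j)"
    using within by (auto simp: indep_vars_def)
  then show "{(case x of (i, j) \<Rightarrow> X i j) -` A \<inter> space M |A.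
      A \<in> sets (case x of (i, j) \<Rightarrow> N i j)} \<subseteq> events"
    by auto
next
  fix A K
  assume K: "K \<noteq> {}" "K \<subseteq> Sigma I J" "finite K"
    and A: "\<forall>x\<in>K. A x \<in> {(case x of (i, j) \<Rightarrow> X i j) -` B \<inter> space M |B.
      B \<in> sets (case x of (i, j) \<Rightarrow> N i j)}"
  then have "\<forall>x\<in>K. \<exists>B. B \<in> sets (case x of (i, j) \<Rightarrow> N i j)
      \<and> A x = (case x of (i, j) \<Rightarrow> X i j) -` B \<inter> space M"
    by blast
  then obtain B where "\<forall>x\<in>K. B x \<in> sets (case x of (i, j) \<Rightarrow> N i j)
      \<and> A x = (case x of (i, j) \<Rightarrow> X i j) -` B x \<inter> space M"
    by (rule bchoice[THEN exE])
  then have B: "\<And>i j. (i, j) \<in> K \<Longrightarrow> B (i, j) \<in> sets (N i j)"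
    and A_eq: "\<And>i j. (i, j) \<in> K \<Longrightarrow> A (i, j) = X i j -` B (i, j) \<inter> space M"
    by auto
  have "prob (\<Inter>x\<in>K. A x) = prob (\<Inter>(i, j)\<in>K. X i j -` B (i, j) \<inter> space M)"
    using A_eq by (intro arg_cong[where f = prob] INF_cong) auto
  also have "\<dots> = (\<Prod>(i, j)\<in>K. prob (X i j -` B (i, j) \<inter> space M))"
    by (rule prob_Inter_vimage_Sigma[OF blocks within K B])
  also have "\<dots> = (\<Prod>x\<in>K. prob (A x))"
    using A_eq by (intro prod.cong) auto
  finally show "prob (\<Inter>x\<in>K. A x) = (\<Prod>x\<in>K. prob (A x))" .
qed

lemma nn_integral_indep_vars_restrict_mult:
  fixes f :: "('i \<Rightarrow> 'b) \<Rightarrow> ennreal" and g :: "'i \<Rightarrow> 'b \<Rightarrow> ennreal"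
  assumes indep: "indep_vars N F I"
    and J: "finite J'" "J \<subseteq> I" "J' \<subseteq> I" "J \<inter> J' = {}"
    and f: "f \<in> borel_measurable (PiM J N)" and g: "\<And>x. x \<in> J' \<Longrightarrow> g x \<in> borel_measurable (N x)"
  shows "(\<integral>\<^sup>+\<omega>. f (\<lambda>x\<in>J. F x \<omega>) * (\<Prod>x\<in>J'. g x (F x \<omega>)) \<partial>M)
       = (\<integral>\<^sup>+\<omega>. f (\<lambda>x\<in>J. F x \<omega>) \<partial>M) * (\<Prod>x\<in>J'. \<integral>\<^sup>+\<omega>. g x (F x \<omega>) \<partial>M)"
proof -
  define block where "block b = (case b of None \<Rightarrow> J | Some x \<Rightarrow> {x})" for b
  define h where "h b = (case b of None \<Rightarrow> f | Some x \<Rightarrow> (\<lambda>\<xi>. g x (\<xi> x)))" for b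
  define B where "B = insert None (Some ` J')"
  have "indep_vars (\<lambda>b. PiM (block b) N) (\<lambda>b \<omega>. \<lambda>x\<in>block b. F x \<omega>) B"
    by (rule indep_vars_restrict[OF indep])
       (use J in \<open>auto simp: block_def B_def disjoint_family_on_def split: option.split\<close>)
  then have "indep_vars (\<lambda>_. borel) (\<lambda>b \<omega>. h b (\<lambda>x\<in>block b. F x \<omega>)) B"
    by (rule indep_vars_compose2)
       (use f g in \<open>auto simp: h_def block_def B_def split: option.split\<close>)
  then have "(\<integral>\<^sup>+\<omega>. (\<Prod>b\<in>B. h b (\<lambda>x\<in>block b. F x \<omega>)) \<partial>M)
      = (\<Prod>b\<in>B. \<integral>\<^sup>+\<omega>. h b (\<lambda>x\<in>block b. F x \<omega>) \<partial>M)"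
    using J by (intro indep_vars_nn_integral) (auto simp: B_def)
  then show ?thesis
    using J by (simp add: B_def prod.reindex h_def block_def)
qed

lemma nn_integral_exp_neg_sum_indep:
  assumes "indep_vars (\<lambda>_. borel) F I" "finite J" "J \<subseteq> I"
  shows "(\<integral>\<^sup>+\<omega>. exp_neg a (\<Sum>x\<in>J. F x \<omega>) \<partial>M) = (\<Prod>x\<in>J. \<integral>\<^sup>+\<omega>. exp_neg a (F x \<omega>) \<partial>M)"
  using nn_integral_indep_vars_restrict_mult[OF assms(1) assms(2) empty_subsetI assms(3),
      of "\<lambda>_. 1" "\<lambda>_. exp_neg a"]
  by (simp add: exp_neg_sum emeasure_space_1)

lemma nn_integral_indep_var_mult:
  fixes X Y :: "'a \<Rightarrow> ennreal"
  assumes "indep_var borel X borel Y"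
  shows "(\<integral>\<^sup>+\<omega>. X \<omega> * Y \<omega> \<partial>M) = (\<integral>\<^sup>+\<omega>. X \<omega> \<partial>M) * (\<integral>\<^sup>+\<omega>. Y \<omega> \<partial>M)"
proof -
  have "indep_vars (\<lambda>_. borel) (case_bool X Y) UNIV"
    using assms unfolding indep_var_def
    by (rule indep_vars_cong[THEN iffD1, rotated 3]) (auto split: bool.split)
  then have "(\<integral>\<^sup>+\<omega>. (\<Prod>b\<in>UNIV. case_bool X Y b \<omega>) \<partial>M) = (\<Prod>b\<in>UNIV. \<integral>\<^sup>+\<omega>. case_bool X Y b \<omega> \<partial>M)"
    by (intro indep_vars_nn_integral) auto
  then show ?thesis by (simp add: UNIV_bool mult.commute)
qed

lemma nn_integral_exp_neg_pos:
  assumes "X \<in> borel_measurable M" "AE \<omega> in M. X \<omega> < \<infinity>"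
  shows "0 < (\<integral>\<^sup>+\<omega>. exp_neg a (X \<omega>) \<partial>M)"
proof -
  have nonzero: "AE \<omega> in M. exp_neg a (X \<omega>) \<noteq> 0"
    using assms(2) by eventually_elim (simp add: exp_neg_def)
  have "\<not> (AE \<omega> in M. exp_neg a (X \<omega>) = 0)"
  proof
    assume "AE \<omega> in M. exp_neg a (X \<omega>) = 0"
    with nonzero have "AE \<omega> in M. False" by eventually_elim simp
    then show False by simp
  qed
  then show ?thesis
    using assms(1) by (simp add: nn_integral_0_iff_AE zero_less_iff_neq_zero)
qed

lemma amgm_nn_integral_exp_neg:
  assumes X: "X \<in> borel_measurable M" "AE \<omega> in M. X \<omega> < \<infinity>" and t: "0 < t"
  shows "2 \<le> ennreal t * (\<integral>\<^sup>+\<omega>. exp_neg (- a) (X \<omega>) \<partial>M) + ennreal (1 / t) * (\<integral>\<^sup>+\<omega>. exp_neg a (X \<omega>) \<partial>M)"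
proof -
  have "(\<integral>\<^sup>+\<omega>. 2 \<partial>M) \<le> (\<integral>\<^sup>+\<omega>. t * exp_neg (- a) (X \<omega>) + (1 / t) * exp_neg a (X \<omega>) \<partial>M)"
    using X(2) t by (intro nn_integral_mono_AE, elim AE_mp)
      (auto simp: exp_neg_def ennreal_mult'[symmetric] ennreal_plus[symmetric]
        amgm_exp[OF t, of "a * _", simplified] simp del: ennreal_plus ennreal_numeral
        intro!: AE_I2)
  also have "\<dots> = ennreal t * (\<integral>\<^sup>+\<omega>. exp_neg (- a) (X \<omega>) \<partial>M) + ennreal (1 / t) * (\<integral>\<^sup>+\<omega>. exp_neg a (X \<omega>) \<partial>M)"
    using X(1) by (subst nn_integral_add) (auto simp: nn_integral_cmult)
  finally show ?thesis
    by (simp add: emeasure_space_1)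
qed

lemma one_le_nn_integral_exp_neg_mult:
  assumes X: "X \<in> borel_measurable M" "AE \<omega> in M. X \<omega> < \<infinity>"
  shows "1 \<le> (\<integral>\<^sup>+\<omega>. exp_neg (- a) (X \<omega>) \<partial>M) * (\<integral>\<^sup>+\<omega>. exp_neg a (X \<omega>) \<partial>M)"
    (is "1 \<le> ?p * ?q")
proof (cases "?p = \<infinity> \<or> ?q = \<infinity>")
  case True
  then show ?thesis
    using nn_integral_exp_neg_pos[OF X, of a] nn_integral_exp_neg_pos[OF X, of "- a"]
    by (auto simp: ennreal_mult_top ennreal_top_mult)
next
  case False
  then obtain p q where pq: "?p = ennreal p" "?q = ennreal q" "0 < p" "0 < q"
    using nn_integral_exp_neg_pos[OF X, of a] nn_integral_exp_neg_pos[OF X, of "- a"]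
    by (cases ?p; cases ?q) (auto simp: top_unique)
  define t where "t = sqrt q / sqrt p"
  have "0 < t" using pq by (simp add: t_def)
  have "p = sqrt p * sqrt p" "q = sqrt q * sqrt q"
    using pq by simp_all
  then have "t * p = sqrt p * sqrt q" "q / t = sqrt p * sqrt q"
    using pq by (simp_all add: t_def field_simps)
  moreover have "ennreal 2 \<le> ennreal (t * p + q / t)"
    using amgm_nn_integral_exp_neg[OF X \<open>0 < t\<close>, of a] \<open>0 < t\<close> pq
    by (simp add: ennreal_mult'[symmetric] ennreal_plus[symmetric] del: ennreal_plus)
  ultimately have "1 \<le> sqrt p * sqrt q"
    using \<open>0 < t\<close> pq by (subst (asm) ennreal_le_iff) auto
  then have "1 \<le> (sqrt p * sqrt q) * (sqrt p * sqrt q)"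
    using mult_mono[of 1 "sqrt p * sqrt q" 1 "sqrt p * sqrt q"] by simp
  then have "1 \<le> p * q"
    using pq by (simp add: algebra_simps flip: real_sqrt_mult)
  then show ?thesis
    using pq by (simp add: ennreal_mult'[symmetric])
qed

end

section \<open>Exponential bound for level crossing\<close>

(*
  The random walk with increments F (y i) - F (z i), started at minus the sum of F over P.
  The hypothesis drift_ge_1 makes the exponential weight below a submartingale.
*)
locale level_crossing = prob_space +
  fixes F :: "'i \<Rightarrow> 'a \<Rightarrow> ennreal" and I :: "'i set"
    and P :: "'i set" and y z :: "nat \<Rightarrow> 'i" and \<alpha> :: real
  assumes indep: "indep_vars (\<lambda>_. borel) F I"
    and measurable_F [measurable]: "\<And>x. F x \<in> borel_measurable M"
    and finite_values: "AE \<omega> in M. \<forall>x\<in>I. F x \<omega> < \<infinity>"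
    and finite_P: "finite P"
    and subset: "P \<subseteq> I" "range y \<subseteq> I" "range z \<subseteq> I"
    and inj: "inj y" "inj z"
    and distinct: "\<And>i. y i \<notin> P" "\<And>i. z i \<notin> P" "\<And>i j. y i \<noteq> z j"
    and nonneg: "0 \<le> \<alpha>"
    and drift_ge_1: "\<And>i.
      1 \<le> (\<integral>\<^sup>+\<omega>. exp_neg (- \<alpha>) (F (y i) \<omega>) \<partial>M) * (\<integral>\<^sup>+\<omega>. exp_neg \<alpha> (F (z i) \<omega>) \<partial>M)"
begin

definition crossed :: "nat \<Rightarrow> ('i \<Rightarrow> ennreal) \<Rightarrow> bool" where
  "crossed j \<xi> \<longleftrightarrow> (\<Sum>x\<in>P. \<xi> x) + (\<Sum>i<j. \<xi> (z i)) \<le> (\<Sum>i<j. \<xi> (y i))"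

definition crossed_before :: "nat \<Rightarrow> ('i \<Rightarrow> ennreal) \<Rightarrow> bool" where
  "crossed_before n \<xi> \<longleftrightarrow> (\<exists>j<n. crossed j \<xi>)"

definition step_weight :: "nat \<Rightarrow> ('i \<Rightarrow> ennreal) \<Rightarrow> ennreal" where
  "step_weight i \<xi> = exp_neg (- \<alpha>) (\<xi> (y i)) * exp_neg \<alpha> (\<xi> (z i))"

definition weight :: "nat \<Rightarrow> ('i \<Rightarrow> ennreal) \<Rightarrow> ennreal" where
  "weight n \<xi> = exp_neg \<alpha> (\<Sum>x\<in>P. \<xi> x) * (\<Prod>i<n. step_weight i \<xi>)"

definition drift :: "nat \<Rightarrow> ennreal" where
  "drift i = (\<integral>\<^sup>+\<omega>. exp_neg (- \<alpha>) (F (y i) \<omega>) \<partial>M) * (\<integral>\<^sup>+\<omega>. exp_neg \<alpha> (F (z i) \<omega>) \<partial>M)"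

definition observed :: "nat \<Rightarrow> 'i set" where
  "observed n = P \<union> y ` {..<n} \<union> z ` {..<n}"

lemma observed_subset: "observed n \<subseteq> I"
  using subset by (auto simp: observed_def)

lemma step_not_observed: "y n \<notin> observed n" "z n \<notin> observed n"
  using inj distinct by (auto simp: observed_def inj_eq) (metis distinct(3))

lemma weight_Suc: "weight (Suc n) \<xi> = weight n \<xi> * step_weight n \<xi>"
  by (simp add: weight_def mult.assoc)

lemma crossed_before_Suc: "crossed_before (Suc n) \<xi> \<longleftrightarrow> crossed_before n \<xi> \<or> crossed n \<xi>"
  by (auto simp: crossed_before_def less_Suc_eq)

lemma crossed_restrict: "j \<le> n \<Longrightarrow> crossed j (restrict \<xi> (observed n)) = crossed j \<xi>"
  by (simp add: crossed_def observed_def)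

lemma crossed_before_restrict:
  "m \<le> Suc n \<Longrightarrow> crossed_before m (restrict \<xi> (observed n)) = crossed_before m \<xi>"
  unfolding crossed_before_def by (meson crossed_restrict less_Suc_eq_le order_less_le_trans)

lemma weight_restrict: "weight n (restrict \<xi> (observed n)) = weight n \<xi>"
  by (simp add: weight_def step_weight_def observed_def)

lemma sets_PiM_crossed_before:
  "{\<xi> \<in> space (PiM J (\<lambda>_. borel)). crossed_before n \<xi>} \<in> sets (PiM J (\<lambda>_. borel))"
proof -
  have "{\<xi> \<in> space (PiM J (\<lambda>_. borel)). crossed_before n \<xi>}
      = (\<Union>j<n. {\<xi> \<in> space (PiM J (\<lambda>_. borel)). crossed j \<xi>})"
    by (auto simp: crossed_before_def)
  also have "\<dots> \<in> sets (PiM J (\<lambda>_. borel))"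
    unfolding crossed_def
    by (intro sets.finite_UN ballI borel_measurable_le borel_measurable_add
        borel_measurable_PiM_sum[where h = id, simplified] borel_measurable_PiM_sum) simp
  finally show ?thesis .
qed

lemma borel_measurable_PiM_weight:
  "weight n \<in> borel_measurable (PiM J (\<lambda>_. borel))"
  unfolding weight_def step_weight_def
  by (intro borel_measurable_times_ennreal borel_measurable_prod_ennreal
      measurable_compose[OF _ borel_measurable_exp_neg]
      borel_measurable_PiM_sum[where h = id, simplified] borel_measurable_PiM_eval)

lemma sets_crossed [measurable]: "{\<omega> \<in> space M. crossed j (\<lambda>x. F x \<omega>)} \<in> sets M"
  unfolding crossed_def by measurable

lemma sets_crossed_before [measurable]: "{\<omega> \<in> space M. crossed_before n (\<lambda>x. F x \<omega>)} \<in> sets M"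
  unfolding crossed_before_def crossed_def by measurable

lemma borel_measurable_weight [measurable]: "(\<lambda>\<omega>. weight n (\<lambda>x. F x \<omega>)) \<in> borel_measurable M"
  unfolding weight_def step_weight_def by measurable

lemma nn_integral_mult_step_weight:
  assumes f: "f \<in> borel_measurable (PiM (observed n) (\<lambda>_. borel))"
  shows "(\<integral>\<^sup>+\<omega>. f (\<lambda>x\<in>observed n. F x \<omega>) * step_weight n (\<lambda>x. F x \<omega>) \<partial>M)
       = (\<integral>\<^sup>+\<omega>. f (\<lambda>x\<in>observed n. F x \<omega>) \<partial>M) * drift n"
proof -
  define g where "g x = (if x = y n then exp_neg (- \<alpha>) else exp_neg \<alpha>)" for x
  have step_weight_eq: "step_weight n \<xi> = (\<Prod>x\<in>{y n, z n}. g x (\<xi> x))" for \<xi>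
    using distinct(3)[of n n] by (simp add: step_weight_def g_def)
  show ?thesis
    unfolding step_weight_eq
    using f subset observed_subset step_not_observed distinct(3)[of n n]
    by (subst nn_integral_indep_vars_restrict_mult[OF indep]) (auto simp: g_def drift_def)
qed

lemma nn_integral_weight:
  "(\<integral>\<^sup>+\<omega>. weight n (\<lambda>x. F x \<omega>) \<partial>M) = (\<integral>\<^sup>+\<omega>. exp_neg \<alpha> (\<Sum>x\<in>P. F x \<omega>) \<partial>M) * (\<Prod>i<n. drift i)"
proof (induction n)
  case 0
  then show ?case by (simp add: weight_def)
next
  case (Suc n)
  have "(\<integral>\<^sup>+\<omega>. weight (Suc n) (\<lambda>x. F x \<omega>) \<partial>M)
      = (\<integral>\<^sup>+\<omega>. weight n (\<lambda>x\<in>observed n. F x \<omega>) * step_weight n (\<lambda>x. F x \<omega>) \<partial>M)"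
    by (simp add: weight_Suc weight_restrict)
  also have "\<dots> = (\<integral>\<^sup>+\<omega>. weight n (\<lambda>x. F x \<omega>) \<partial>M) * drift n"
    using nn_integral_mult_step_weight[of "weight n" n, OF borel_measurable_PiM_weight]
    unfolding weight_restrict .
  finally show ?case
    using Suc.IH by (simp add: mult.assoc)
qed

lemma one_le_weight:
  assumes finite: "\<forall>x\<in>I. \<xi> x < \<infinity>" and "crossed j \<xi>"
  shows "1 \<le> weight j \<xi>"
proof -
  have "weight j \<xi> = exp_neg \<alpha> ((\<Sum>x\<in>P. \<xi> x) + (\<Sum>i<j. \<xi> (z i))) * exp_neg (- \<alpha>) (\<Sum>i<j. \<xi> (y i))"
    by (simp add: weight_def step_weight_def prod.distrib exp_neg_sum exp_neg_add mult_ac)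
  moreover have "(\<Sum>i<j. \<xi> (y i)) < \<infinity>"
    using finite subset(2) by (auto simp: image_subset_iff)
  ultimately show ?thesis
    using assms(2) nonneg by (simp add: crossed_def one_le_exp_neg_mult)
qed

lemma nn_integral_weight_crossed_before_Suc:
  "(\<integral>\<^sup>+\<omega>. weight n (\<lambda>x. F x \<omega>) * indicator {\<omega> \<in> space M. crossed_before (Suc n) (\<lambda>x. F x \<omega>)} \<omega> \<partial>M)
     \<le> (\<integral>\<^sup>+\<omega>. weight (Suc n) (\<lambda>x. F x \<omega>)
          * indicator {\<omega> \<in> space M. crossed_before (Suc n) (\<lambda>x. F x \<omega>)} \<omega> \<partial>M)"
    (is "?I \<le> _")
proof -
  \<comment> \<open>\<open>crossed_before (Suc n)\<close> is decided by the first \<open>n\<close> steps, hence independent of step \<open>n\<close>\<close>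
  define f where "f \<xi> = weight n \<xi> * indicator {\<xi>. crossed_before (Suc n) \<xi>} \<xi>" for \<xi>
  have f: "f \<in> borel_measurable (PiM (observed n) (\<lambda>_. borel))"
    unfolding f_def using sets_PiM_crossed_before
    by (intro borel_measurable_times_ennreal borel_measurable_PiM_weight borel_measurable_indicator') auto
  have f_restrict: "f (\<lambda>x\<in>observed n. F x \<omega>)
      = weight n (\<lambda>x. F x \<omega>) * indicator {\<omega> \<in> space M. crossed_before (Suc n) (\<lambda>x. F x \<omega>)} \<omega>"
    if "\<omega> \<in> space M" for \<omega>
    using that by (simp add: f_def weight_restrict crossed_before_restrict indicator_def)
  have "?I = (\<integral>\<^sup>+\<omega>. f (\<lambda>x\<in>observed n. F x \<omega>) \<partial>M)"
    by (intro nn_integral_cong) (simp add: f_restrict)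
  also have "\<dots> \<le> (\<integral>\<^sup>+\<omega>. f (\<lambda>x\<in>observed n. F x \<omega>) \<partial>M) * drift n"
    using mult_left_mono[OF drift_ge_1[of n, folded drift_def]] by simp
  also have "\<dots> = (\<integral>\<^sup>+\<omega>. f (\<lambda>x\<in>observed n. F x \<omega>) * step_weight n (\<lambda>x. F x \<omega>) \<partial>M)"
    by (rule nn_integral_mult_step_weight[OF f, symmetric])
  also have "\<dots> = (\<integral>\<^sup>+\<omega>. weight (Suc n) (\<lambda>x. F x \<omega>)
          * indicator {\<omega> \<in> space M. crossed_before (Suc n) (\<lambda>x. F x \<omega>)} \<omega> \<partial>M)"
    by (intro nn_integral_cong) (simp add: f_restrict weight_Suc mult_ac)
  finally show ?thesis .
qed

lemma emeasure_crossed_before_le: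
  "emeasure M {\<omega> \<in> space M. crossed_before n (\<lambda>x. F x \<omega>)}
     \<le> (\<integral>\<^sup>+\<omega>. weight n (\<lambda>x. F x \<omega>) * indicator {\<omega> \<in> space M. crossed_before n (\<lambda>x. F x \<omega>)} \<omega> \<partial>M)"
proof (induction n)
  case 0
  then show ?case by (simp add: crossed_before_def)
next
  case (Suc n)
  define E where "E m = {\<omega> \<in> space M. crossed_before m (\<lambda>x. F x \<omega>)}" for m
  define C where "C = {\<omega> \<in> space M. crossed n (\<lambda>x. F x \<omega>)} - E n"
  have [measurable]: "E m \<in> sets M" "C \<in> sets M" for m
    by (simp_all add: E_def C_def sets.Diff)
  have E_Suc: "E (Suc n) = E n \<union> C" "E n \<inter> C = {}"
    by (auto simp: E_def C_def crossed_before_Suc)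
  have "emeasure M C \<le> (\<integral>\<^sup>+\<omega>. weight n (\<lambda>x. F x \<omega>) * indicator C \<omega> \<partial>M)"
  proof -
    have "AE \<omega> in M. indicator C \<omega> \<le> weight n (\<lambda>x. F x \<omega>) * indicator C \<omega>"
      using finite_values by eventually_elim (auto simp: C_def indicator_def one_le_weight)
    then have "(\<integral>\<^sup>+\<omega>. indicator C \<omega> \<partial>M) \<le> (\<integral>\<^sup>+\<omega>. weight n (\<lambda>x. F x \<omega>) * indicator C \<omega> \<partial>M)"
      by (rule nn_integral_mono_AE)
    then show ?thesis by simp
  qed
  then have "emeasure M (E (Suc n))
      \<le> (\<integral>\<^sup>+\<omega>. weight n (\<lambda>x. F x \<omega>) * indicator (E n) \<omega> \<partial>M)
        + (\<integral>\<^sup>+\<omega>. weight n (\<lambda>x. F x \<omega>) * indicator C \<omega> \<partial>M)"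
    using Suc.IH E_Suc by (simp add: plus_emeasure[symmetric] add_mono E_def)
  also have "\<dots> = (\<integral>\<^sup>+\<omega>. weight n (\<lambda>x. F x \<omega>) * indicator (E (Suc n)) \<omega> \<partial>M)"
    using E_Suc
    by (subst nn_integral_add[symmetric]) (auto intro!: nn_integral_cong simp: indicator_def)
  also have "\<dots> \<le> (\<integral>\<^sup>+\<omega>. weight (Suc n) (\<lambda>x. F x \<omega>) * indicator (E (Suc n)) \<omega> \<partial>M)"
    unfolding E_def by (rule nn_integral_weight_crossed_before_Suc)
  finally show ?case by (simp add: E_def)
qed

theorem emeasure_crossing_le:
  assumes bound: "\<And>n. (\<Prod>i<n. drift i) \<le> C"
  shows "emeasure M {\<omega> \<in> space M. \<exists>j. crossed j (\<lambda>x. F x \<omega>)}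
    \<le> (\<integral>\<^sup>+\<omega>. exp_neg \<alpha> (\<Sum>x\<in>P. F x \<omega>) \<partial>M) * C"
proof -
  define E where "E n = {\<omega> \<in> space M. crossed_before n (\<lambda>x. F x \<omega>)}" for n
  have E: "range E \<subseteq> sets M" "incseq E"
    by (auto simp: E_def incseq_def crossed_before_def) (meson order_less_le_trans)
  have "{\<omega> \<in> space M. \<exists>j. crossed j (\<lambda>x. F x \<omega>)} = (\<Union>n. E n)"
    by (auto simp: E_def crossed_before_def)
  then have "emeasure M {\<omega> \<in> space M. \<exists>j. crossed j (\<lambda>x. F x \<omega>)} = (SUP n. emeasure M (E n))"
    using SUP_emeasure_incseq[OF E] by simp
  also have "\<dots> \<le> (\<integral>\<^sup>+\<omega>. exp_neg \<alpha> (\<Sum>x\<in>P. F x \<omega>) \<partial>M) * C"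
  proof (rule SUP_least)
    fix n
    have "emeasure M (E n) \<le> (\<integral>\<^sup>+\<omega>. weight n (\<lambda>x. F x \<omega>) * indicator (E n) \<omega> \<partial>M)"
      unfolding E_def by (rule emeasure_crossed_before_le)
    also have "\<dots> \<le> (\<integral>\<^sup>+\<omega>. weight n (\<lambda>x. F x \<omega>) \<partial>M)"
      by (intro nn_integral_mono) (simp add: indicator_def)
    also have "\<dots> \<le> (\<integral>\<^sup>+\<omega>. exp_neg \<alpha> (\<Sum>x\<in>P. F x \<omega>) \<partial>M) * C"
      unfolding nn_integral_weight by (intro mult_left_mono bound) simp
    finally show "emeasure M (E n) \<le> (\<integral>\<^sup>+\<omega>. exp_neg \<alpha> (\<Sum>x\<in>P. F x \<omega>) \<partial>M) * C" .
  qed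
  finally show ?thesis .
qed

end

section \<open>The Crump--Mode--Jagers setting\<close>

locale cmj = prob_space M
  for M :: "'a measure"
    and Xf :: "nat list \<Rightarrow> nat \<Rightarrow> 'a \<Rightarrow> ennreal"
    and Xp :: "nat \<Rightarrow> 'a \<Rightarrow> ennreal" +
  assumes measurable_Xf [measurable]: "\<And>v j. Xf v j \<in> borel_measurable M"
    and measurable_Xp [measurable]: "\<And>j. Xp j \<in> borel_measurable M"
    and copies: "\<And>v. v \<in> UH \<Longrightarrow>
       distr M (PiM {1..} (\<lambda>_. borel)) (\<lambda>\<omega>. restrict (\<lambda>j. Xf v j \<omega>) {1..})
     = distr M (PiM {1..} (\<lambda>_. borel)) (\<lambda>\<omega>. restrict (\<lambda>j. Xf [] j \<omega>) {1..})"
    and indep_tree: "indep_vars (\<lambda>_. PiM {1..} (\<lambda>_. borel))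
       (\<lambda>v \<omega>. restrict (\<lambda>j. Xf v j \<omega>) {1..}) UH"
    and copy_p: "distr M (PiM {1..} (\<lambda>_. borel)) (\<lambda>\<omega>. restrict (\<lambda>j. Xp j \<omega>) {1..})
     = distr M (PiM {1..} (\<lambda>_. borel)) (\<lambda>\<omega>. restrict (\<lambda>j. Xf [] j \<omega>) {1..})"
    and indep_p: "indep_var
       (PiM {1..} (\<lambda>_. borel)) (\<lambda>\<omega>. restrict (\<lambda>j. Xf [] j \<omega>) {1..})
       (PiM {1..} (\<lambda>_. borel)) (\<lambda>\<omega>. restrict (\<lambda>j. Xp j \<omega>) {1..})"
    and indep_generic: "indep_vars (\<lambda>_. borel) (\<lambda>j. Xf [] j) {1..}"
    and finite_generic: "\<And>j. 1 \<le> j \<Longrightarrow> AE \<omega> in M. Xf [] j \<omega> < \<infinity>"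
begin

(*
  laplace (- \<alpha>) j stands for E exp(\<alpha> X_j); the junk value exp_neg a \<infinity> = 0 is harmless because
  the X_j are almost surely finite.
*)
definition laplace :: "real \<Rightarrow> nat \<Rightarrow> ennreal" where
  "laplace a j = (\<integral>\<^sup>+\<omega>. exp_neg a (Xf [] j \<omega>) \<partial>M)"

lemma distr_Xf: "v \<in> UH \<Longrightarrow> 1 \<le> j \<Longrightarrow> distr M borel (Xf v j) = distr M borel (Xf [] j)"
  by (rule distr_component_eq[OF _ _ copies]) auto

lemma distr_Xp: "1 \<le> j \<Longrightarrow> distr M borel (Xp j) = distr M borel (Xf [] j)"
  by (rule distr_component_eq[OF _ _ copy_p]) auto

lemma nn_integral_exp_neg_Xf: "v \<in> UH \<Longrightarrow> 1 \<le> j \<Longrightarrow> (\<integral>\<^sup>+\<omega>. exp_neg a (Xf v j \<omega>) \<partial>M) = laplace a j"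
  unfolding laplace_def by (rule nn_integral_eq_if_distr_eq[OF distr_Xf]) auto

lemma indep_waiting: "indep_vars (\<lambda>_. borel) (\<lambda>(v, j). Xf v j) (UH \<times> {1..})"
proof -
  have "indep_vars (\<lambda>_. borel) (Xf v) {1..}" if "v \<in> UH" for v
    by (rule indep_vars_if_distr_restrict_eq[OF _ _ copies[OF that] indep_generic]) auto
  moreover have "(\<lambda>(v :: nat list, j :: nat). borel) = (\<lambda>_. borel :: ennreal measure)"
    by auto
  ultimately show ?thesis
    using indep_vars_Sigma[OF indep_tree] by simp
qed

lemma AE_Xf_finite: "v \<in> UH \<Longrightarrow> 1 \<le> j \<Longrightarrow> AE \<omega> in M. Xf v j \<omega> < \<infinity>"
  using AE_iff_if_distr_eq[OF distr_Xf, of v j "\<lambda>x. x < \<infinity>"] finite_generic by simp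

lemma AE_Xp_finite: "1 \<le> j \<Longrightarrow> AE \<omega> in M. Xp j \<omega> < \<infinity>"
  using AE_iff_if_distr_eq[OF distr_Xp, of j "\<lambda>x. x < \<infinity>"] finite_generic by simp

lemma AE_waiting_finite: "AE \<omega> in M. \<forall>(v, j)\<in>UH \<times> {1..}. Xf v j \<omega> < \<infinity>"
proof -
  have "\<forall>(v, j)\<in>UH \<times> {1..}. AE \<omega> in M. Xf v j \<omega> < \<infinity>"
    using AE_Xf_finite by auto
  then show ?thesis
    by (subst AE_ball_countable) auto
qed

lemma birth_finite:
  assumes "\<forall>(v, j)\<in>UH \<times> {1..}. Xf v j \<omega> < \<infinity>" "u \<in> UH"
  shows "birth Xf u \<omega> \<noteq> \<infinity>"
proof -
  have "path_edges [] u \<subseteq> UH \<times> {1..}"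
    using path_edges_subset[of "[]" "{1..}" u] assms(2) by (simp add: UH_eq_lists)
  then show ?thesis
    using assms(1) by (auto simp: birth_def birth_aux_eq_sum_path_edges less_top)
qed

lemma nn_integral_exp_neg_partial_sum:
  "(\<integral>\<^sup>+\<omega>. exp_neg a (\<Sum>i=1..j. Xf [] i \<omega>) \<partial>M) = (\<Prod>i=1..j. laplace a i)"
  by (simp add: nn_integral_exp_neg_sum_indep[OF indep_generic] laplace_def)

lemma nn_integral_exp_neg_path_edges:
  assumes "p \<in> UH" "w \<in> UH"
  shows "(\<integral>\<^sup>+\<omega>. exp_neg a (\<Sum>(q, i)\<in>path_edges p w. Xf q i \<omega>) \<partial>M)
    = prod_list (map (\<lambda>m. \<Prod>i=1..m. laplace a i) w)"
proof -
  have edges: "path_edges p w \<subseteq> UH \<times> {1..}"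
    using path_edges_subset[of p "{1..}" w] assms by (simp add: UH_eq_lists)
  have "(\<integral>\<^sup>+\<omega>. exp_neg a (\<Sum>(q, i)\<in>path_edges p w. Xf q i \<omega>) \<partial>M)
      = (\<Prod>(q, i)\<in>path_edges p w. \<integral>\<^sup>+\<omega>. exp_neg a (Xf q i \<omega>) \<partial>M)"
    using nn_integral_exp_neg_sum_indep[OF indep_waiting _ edges] by (simp add: case_prod_unfold)
  also have "\<dots> = (\<Prod>(q, i)\<in>path_edges p w. laplace a i)"
    using edges by (intro prod.cong) (auto simp: nn_integral_exp_neg_Xf)
  finally show ?thesis
    by (simp add: prod_path_edges)
qed

lemma nn_integral_exp_increment:
  assumes i: "1 \<le> i"
  shows "(\<integral>\<^sup>+\<omega>. ennreal (exp (\<alpha> * (enn2real (Xp i \<omega>) - enn2real (Xf [] i \<omega>)))) \<partial>M)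
    = laplace (- \<alpha>) i * laplace \<alpha> i"
proof -
  have "(\<integral>\<^sup>+\<omega>. ennreal (exp (\<alpha> * (enn2real (Xp i \<omega>) - enn2real (Xf [] i \<omega>)))) \<partial>M)
      = (\<integral>\<^sup>+\<omega>. exp_neg \<alpha> (Xf [] i \<omega>) * exp_neg (- \<alpha>) (Xp i \<omega>) \<partial>M)"
    using AE_Xp_finite[OF i] finite_generic[OF i]
    by (intro nn_integral_cong_AE, elim AE_mp)
       (auto simp: exp_neg_def ennreal_mult'[symmetric] exp_add[symmetric] algebra_simps intro!: AE_I2)
  also have "\<dots> = laplace \<alpha> i * (\<integral>\<^sup>+\<omega>. exp_neg (- \<alpha>) (Xp i \<omega>) \<partial>M)"
  proof -
    have "indep_var borel ((\<lambda>f. exp_neg \<alpha> (f i)) \<circ> (\<lambda>\<omega>. \<lambda>j\<in>{1..}. Xf [] j \<omega>))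
        borel ((\<lambda>f. exp_neg (- \<alpha>) (f i)) \<circ> (\<lambda>\<omega>. \<lambda>j\<in>{1..}. Xp j \<omega>))"
      using i by (intro indep_var_compose[OF indep_p]) auto
    then show ?thesis
      using i by (simp add: comp_def nn_integral_indep_var_mult laplace_def)
  qed
  also have "(\<integral>\<^sup>+\<omega>. exp_neg (- \<alpha>) (Xp i \<omega>) \<partial>M) = laplace (- \<alpha>) i"
    unfolding laplace_def by (rule nn_integral_eq_if_distr_eq[OF distr_Xp[OF i]]) auto
  finally show ?thesis
    by (simp add: mult.commute)
qed

lemma one_le_laplace_mult: "1 \<le> i \<Longrightarrow> 1 \<le> laplace (- a) i * laplace a i"
  unfolding laplace_def by (rule one_le_nn_integral_exp_neg_mult) (use finite_generic in auto)

lemma sets_catches_up [measurable]: "{\<omega> \<in> space M. catches_up Xf u v \<omega>} \<in> sets M"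
  unfolding catches_up_def birth_def birth_aux_eq_sum_path_edges by measurable

lemma level_crossing_catch_up:
  assumes u: "u \<in> UH" and v: "k # w \<in> UH" and nonneg: "0 \<le> \<alpha>"
  shows "level_crossing M (\<lambda>(v, j). Xf v j) (UH \<times> {1..}) (path_edges (u @ [k]) (w @ [k]))
    (\<lambda>i. (u, Suc (k + i))) (\<lambda>i. (u @ k # w, Suc (k + i))) \<alpha>"
proof -
  define P where "P = path_edges (u @ [k]) (w @ [k])"
  have k: "1 \<le> k" "u @ [k] \<in> UH" "w @ [k] \<in> UH" "u @ k # w \<in> UH"
    using u v by (auto simp: UH_def)
  have P: "P = path_edges (u @ [k]) w \<union> {u @ k # w} \<times> {1..k}"
    by (simp add: P_def path_edges_append)
  have "P \<subseteq> UH \<times> {1..}"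
    using path_edges_subset[of "u @ [k]" "{1..}" "w @ [k]"] k by (simp add: P_def UH_eq_lists)
  moreover have "(u, j) \<notin> P" "(u @ k # w, Suc (k + j)) \<notin> P" for j
    unfolding P by (auto dest: path_edges_parent)
  moreover have "(\<integral>\<^sup>+\<omega>. exp_neg (- \<alpha>) (Xf u (Suc (k + i)) \<omega>) \<partial>M)
      * (\<integral>\<^sup>+\<omega>. exp_neg \<alpha> (Xf (u @ k # w) (Suc (k + i)) \<omega>) \<partial>M)
      = laplace (- \<alpha>) (Suc (k + i)) * laplace \<alpha> (Suc (k + i))" for i
    using u k by (simp add: nn_integral_exp_neg_Xf)
  ultimately show ?thesis
    using indep_waiting AE_waiting_finite u k nonneg one_le_laplace_mult
    by unfold_locales (auto simp: P_def inj_def case_prod_unfold)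
qed

lemma emeasure_catches_up_le:
  assumes u: "u \<in> UH" and v: "k # w \<in> UH" and nonneg: "0 \<le> \<alpha>" and "K \<le> k"
    and bound: "\<And>n. (\<Prod>i=K+1..n. laplace (- \<alpha>) i * laplace \<alpha> i) \<le> C"
  shows "emeasure M {\<omega> \<in> space M. catches_up Xf u (k # w) \<omega>}
    \<le> prod_list (map (\<lambda>m. \<Prod>i=1..m. laplace \<alpha> i) (k # w)) * C"
proof -
  define P where "P = path_edges (u @ [k]) (w @ [k])"
  have k: "u @ [k] \<in> UH" "w @ [k] \<in> UH" "u @ k # w \<in> UH"
    using u v by (auto simp: UH_def)
  interpret walk: level_crossing M "\<lambda>(v, j). Xf v j" "UH \<times> {1..}" P
      "\<lambda>i. (u, Suc (k + i))" "\<lambda>i. (u @ k # w, Suc (k + i))" \<alpha>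
    unfolding P_def using u v nonneg by (rule level_crossing_catch_up)
  have drift_bound: "(\<Prod>i<n. walk.drift i) \<le> C" for n
  proof -
    have "(\<Prod>i<n. walk.drift i) = (\<Prod>m=Suc k..k+n. laplace (- \<alpha>) m * laplace \<alpha> m)"
      using u k prod_lessThan_shift[where f = "\<lambda>m. laplace (- \<alpha>) m * laplace \<alpha> m"]
      by (simp add: walk.drift_def nn_integral_exp_neg_Xf)
    also have "\<dots> \<le> (\<Prod>m=K+1..k+n. laplace (- \<alpha>) m * laplace \<alpha> m)"
      using \<open>K \<le> k\<close> by (intro prod_le_prod_superset_ennreal one_le_laplace_mult) auto
    finally show ?thesis using bound order_trans by blast
  qed
  have "emeasure M {\<omega> \<in> space M. \<exists>j. walk.crossed j (\<lambda>x. case x of (v, j) \<Rightarrow> Xf v j \<omega>)}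
      \<le> (\<integral>\<^sup>+\<omega>. exp_neg \<alpha> (\<Sum>x\<in>P. case x of (v, j) \<Rightarrow> Xf v j \<omega>) \<partial>M) * C"
    using walk.emeasure_crossing_le[OF drift_bound] by (simp add: case_prod_unfold)
  also have "\<dots> = prod_list (map (\<lambda>m. \<Prod>i=1..m. laplace \<alpha> i) (k # w)) * C"
    using nn_integral_exp_neg_path_edges[OF k(1,2), of \<alpha>] by (simp add: P_def case_prod_unfold mult.commute)
  moreover have "AE \<omega> in M. catches_up Xf u (k # w) \<omega>
      \<longrightarrow> (\<exists>j. walk.crossed j (\<lambda>x. case x of (v, j) \<Rightarrow> Xf v j \<omega>))"
    using AE_waiting_finite
  proof eventually_elim
    case (elim \<omega>)
    then have "birth Xf (u @ [k]) \<omega> \<noteq> \<infinity>"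
      using birth_finite k(1) by blast
    then show ?case
      by (auto simp: catches_up_Cons_iff walk.crossed_def case_prod_unfold simp flip: P_def)
  qed
  then have "emeasure M {\<omega> \<in> space M. catches_up Xf u (k # w) \<omega>}
      \<le> emeasure M {\<omega> \<in> space M. \<exists>j. walk.crossed j (\<lambda>x. case x of (v, j) \<Rightarrow> Xf v j \<omega>)}"
    by (intro emeasure_mono_AE) (auto simp: walk.crossed_def)
  ultimately show ?thesis by simp
qed

lemma laplace_products_bounded:
  assumes "\<exists>L<\<infinity>. (\<lambda>n. \<Prod>i\<in>{K+1..n}.
      \<integral>\<^sup>+\<omega>. ennreal (exp (\<alpha> * (enn2real (Xp i \<omega>) - enn2real (Xf [] i \<omega>)))) \<partial>M) \<longlonglongrightarrow> L"
  obtains L where "L < \<infinity>" "\<And>n. (\<Prod>i=K+1..n. laplace (- \<alpha>) i * laplace \<alpha> i) \<le> L"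
proof -
  have "(\<lambda>n. \<Prod>i\<in>{K+1..n}.
      \<integral>\<^sup>+\<omega>. ennreal (exp (\<alpha> * (enn2real (Xp i \<omega>) - enn2real (Xf [] i \<omega>)))) \<partial>M)
      = (\<lambda>n. \<Prod>i=K+1..n. laplace (- \<alpha>) i * laplace \<alpha> i)"
    by (intro ext prod.cong refl nn_integral_exp_increment) auto
  then obtain L where L: "L < \<infinity>" "(\<lambda>n. \<Prod>i=K+1..n. laplace (- \<alpha>) i * laplace \<alpha> i) \<longlonglongrightarrow> L"
    using assms by auto
  moreover have "incseq (\<lambda>n. \<Prod>i=K+1..n. laplace (- \<alpha>) i * laplace \<alpha> i)"
    by (intro monoI prod_le_prod_superset_ennreal one_le_laplace_mult) auto
  ultimately show ?thesis
    using that incseq_le by blast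
qed

theorem infsum_emeasure_catches_up_lt_top:
  assumes nonneg: "0 \<le> \<alpha>" and u: "u \<in> UH"
    and H1: "(\<Sum>\<^sub>\<infinity>j\<in>{1..}. \<integral>\<^sup>+\<omega>. exp_neg \<alpha> (\<Sum>i\<in>{1..j}. Xf [] i \<omega>) \<partial>M) < 1"
    and H2: "\<exists>L<\<infinity>. (\<lambda>n. \<Prod>i\<in>{K+1..n}.
      \<integral>\<^sup>+\<omega>. ennreal (exp (\<alpha> * (enn2real (Xp i \<omega>) - enn2real (Xf [] i \<omega>)))) \<partial>M) \<longlonglongrightarrow> L"
  shows "(\<Sum>\<^sub>\<infinity>v\<in>{v \<in> UH. v \<noteq> [] \<and> K \<le> hd v}. emeasure M {\<omega> \<in> space M. catches_up Xf u v \<omega>}) < \<infinity>"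
proof -
  define a where "a = (\<lambda>m. \<Prod>i=1..m. laplace \<alpha> i)"
  obtain L where L: "L < \<infinity>" "\<And>n. (\<Prod>i=K+1..n. laplace (- \<alpha>) i * laplace \<alpha> i) \<le> L"
    using laplace_products_bounded[OF H2] by blast
  have "(\<Sum>\<^sub>\<infinity>j\<in>{1..}. \<integral>\<^sup>+\<omega>. exp_neg \<alpha> (\<Sum>i\<in>{1..j}. Xf [] i \<omega>) \<partial>M)
      = (\<Sum>\<^sub>\<infinity>j\<in>{1..}. a j)"
    by (simp only: nn_integral_exp_neg_partial_sum a_def)
  also have "\<dots> = (\<integral>\<^sup>+m. a m \<partial>count_space {1..})"
    by (rule infsum_eq_nn_integral_count_space) simp
  finally have "(\<integral>\<^sup>+m. a m \<partial>count_space {1..}) < 1"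
    using H1 by simp
  then have finite_series: "(\<integral>\<^sup>+v. prod_list (map a v) \<partial>count_space (lists {1..})) < \<infinity>"
    by (intro nn_integral_prod_list_lists_lt_top) simp_all
  have "(\<Sum>\<^sub>\<infinity>v\<in>{v \<in> UH. v \<noteq> [] \<and> K \<le> hd v}. emeasure M {\<omega> \<in> space M. catches_up Xf u v \<omega>})
      \<le> (\<Sum>\<^sub>\<infinity>v\<in>lists {1..}. prod_list (map a v) * L)"
  proof (rule infsum_mono_neutral)
    fix v assume "v \<in> {v \<in> UH. v \<noteq> [] \<and> K \<le> hd v} \<inter> lists {1..}"
    then obtain k w where "v = k # w" "k # w \<in> UH" "K \<le> k"
      by (cases v) auto
    then show "emeasure M {\<omega> \<in> space M. catches_up Xf u v \<omega>} \<le> prod_list (map a v) * L"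
      using emeasure_catches_up_le[OF u _ nonneg _ L(2)] by (simp add: a_def)
  qed (auto simp: UH_eq_lists intro: nonneg_summable_on_complete)
  also have "\<dots> = (\<integral>\<^sup>+v. prod_list (map a v) \<partial>count_space (lists {1..})) * L"
    by (simp add: infsum_eq_nn_integral_count_space nn_integral_multc)
  also have "\<dots> < \<infinity>"
    using finite_series L(1) by (simp add: ennreal_mult_less_top)
  finally show ?thesis .
qed

end

theorem proposition3p10:
  fixes M :: "'a measure"
    and Xf :: "nat list \<Rightarrow> nat \<Rightarrow> 'a \<Rightarrow> ennreal"
    and Xp :: "nat \<Rightarrow> 'a \<Rightarrow> ennreal"
    and \<alpha> :: real and K :: nat and u :: "nat list"
  assumes P: "prob_space M"
    and meas: "\<And>v j. Xf v j \<in> borel_measurable M"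
    and measp: "\<And>j. Xp j \<in> borel_measurable M"
    \<comment> \<open>each \<open>(X(vj))\<^sub>j\<close> is a copy of the generic sequence \<open>(X\<^sub>j)\<^sub>j = (X(j))\<^sub>j\<close>\<close>
    and copies: "\<And>v. v \<in> UH \<Longrightarrow>
       distr M (PiM {1..} (\<lambda>_. borel)) (\<lambda>\<omega>. restrict (\<lambda>j. Xf v j \<omega>) {1..})
     = distr M (PiM {1..} (\<lambda>_. borel)) (\<lambda>\<omega>. restrict (\<lambda>j. Xf [] j \<omega>) {1..})"
    \<comment> \<open>independent over different \<open>v\<close>\<close>
    and indep_tree: "prob_space.indep_vars M (\<lambda>_. PiM {1..} (\<lambda>_. borel))
       (\<lambda>v \<omega>. restrict (\<lambda>j. Xf v j \<omega>) {1..}) UH"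
    \<comment> \<open>\<open>X'\<close> is an independent copy of \<open>X\<close>\<close>
    and copy_p: "distr M (PiM {1..} (\<lambda>_. borel)) (\<lambda>\<omega>. restrict (\<lambda>j. Xp j \<omega>) {1..})
     = distr M (PiM {1..} (\<lambda>_. borel)) (\<lambda>\<omega>. restrict (\<lambda>j. Xf [] j \<omega>) {1..})"
    and indep_p: "prob_space.indep_var M
       (PiM {1..} (\<lambda>_. borel)) (\<lambda>\<omega>. restrict (\<lambda>j. Xf [] j \<omega>) {1..})
       (PiM {1..} (\<lambda>_. borel)) (\<lambda>\<omega>. restrict (\<lambda>j. Xp j \<omega>) {1..})"
    \<comment> \<open>Assumption (A)\<close>
    and A1: "prob_space.indep_vars M (\<lambda>_. borel) (\<lambda>j. Xf [] j) {1..}"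
    and A2: "\<And>j. 1 \<le> j \<Longrightarrow> AE \<omega> in M. Xf [] j \<omega> < \<infinity>"
    and A3: "(\<Sum>\<^sub>\<infinity>j\<in>{1..}. \<Prod>i\<in>{1..j}. emeasure M {\<omega>\<in>space M. Xf [] i \<omega> = 0}) < 1"
    \<comment> \<open>the hypotheses of the proposition\<close>
    and alpha: "\<alpha> > 0" and K: "1 \<le> K"
    and H1: "(\<Sum>\<^sub>\<infinity>j\<in>{1..}. \<integral>\<^sup>+\<omega>. exp_neg \<alpha> (\<Sum>i\<in>{1..j}. Xf [] i \<omega>) \<partial>M) < 1"
    and H2: "\<exists>L<\<infinity>. (\<lambda>n. \<Prod>i\<in>{K+1..n}.
        \<integral>\<^sup>+\<omega>. ennreal (exp (\<alpha> * (enn2real (Xp i \<omega>) - enn2real (Xf [] i \<omega>)))) \<partial>M)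
        \<longlonglongrightarrow> L"
    and u: "u \<in> UH"
  shows "(\<integral>\<^sup>+\<omega>. ecard {v \<in> UH. v \<noteq> [] \<and> K \<le> hd v \<and> catches_up Xf u v \<omega>} \<partial>M)
           = (\<Sum>\<^sub>\<infinity>v\<in>{v \<in> UH. v \<noteq> [] \<and> K \<le> hd v}.
                emeasure M {\<omega>\<in>space M. catches_up Xf u v \<omega>})
         \<and> (\<Sum>\<^sub>\<infinity>v\<in>{v \<in> UH. v \<noteq> [] \<and> K \<le> hd v}.
                emeasure M {\<omega>\<in>space M. catches_up Xf u v \<omega>}) < \<infinity>"
proof -
  interpret cmj M Xf Xp
    by (intro cmj.intro cmj_axioms.intro)
       (use P meas measp copies indep_tree copy_p indep_p A1 A2 in auto)
  have "(\<integral>\<^sup>+\<omega>. ecard {v \<in> UH. v \<noteq> [] \<and> K \<le> hd v \<and> catches_up Xf u v \<omega>} \<partial>M)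
      = (\<Sum>\<^sub>\<infinity>v\<in>{v \<in> UH. v \<noteq> [] \<and> K \<le> hd v}. emeasure M {\<omega>\<in>space M. catches_up Xf u v \<omega>})"
    using nn_integral_ecard_eq_infsum[of "{v \<in> UH. v \<noteq> [] \<and> K \<le> hd v}" M "catches_up Xf u"]
    by (simp add: conj_assoc)
  moreover have "(\<Sum>\<^sub>\<infinity>v\<in>{v \<in> UH. v \<noteq> [] \<and> K \<le> hd v}.
      emeasure M {\<omega>\<in>space M. catches_up Xf u v \<omega>}) < \<infinity>"
    using alpha u H1 H2 by (intro infsum_emeasure_catches_up_lt_top) simp_all
  ultimately show ?thesis ..
qed

end
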